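(* Let $M=\begin{bmatrix} e & f\\ g & h\end{bmatrix}\in SL_2(\mathbb C)$, let $\mu=\operatorname{tr}M$ with $\mu^2\neq 4$, let $n\ge1$ be an integer, and put $X=S_{n-1}^2(\mu)$ and $Y=S_{n-1}(\mu)S_{n-2}(\mu)$. Then $$\sum_{i=0}^{n-1}(\mathrm{Ad}_M)^i=\frac{1}{\mu^2-4}\begin{bmatrix} C_{11}&C_{12}&C_{13}\\ C_{21}&C_{22}&C_{23}\\ C_{31}&C_{32}&C_{33}\end{bmatrix},$$ where $C_{11}=2nfg+h^2(2X-\mu Y)-2h(\mu X-2Y)+(\mu^2-2)X-\mu Y$, $C_{12}=2f\big(n(e-h)+h(2X-\mu Y)-\mu X+2Y\big)$, $C_{13}=f^2(2n-2X+\mu Y)$, $C_{21}=-g\big(n(h-e)-h(2X-\mu Y)+\mu X-2Y\big)$, $C_{22}=n(e-h)^2+2fg(2X-\mu Y)$, $C_{23}=f\big(n(e-h)+h(2X-\mu Y)-\mu X+(\mu^2-2)Y\big)$, $C_{31}=g^2(2n-2X+\mu Y)$, $C_{32}=-2g\big(n(h-e)-h(2X-\mu Y)+\mu X-(\mu^2-2)Y\big)$, $C_{33}=2nfg+h^2(2X-\mu Y)-2h\big(\mu X-(\mu^2-2)Y\big)+(\mu^2-2)X-(\mu^3-3\mu)Y$.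
   Context: $S_k(v)$ are the Chebyshev polynomials of the second kind: $S_0(v)=1$, $S_1(v)=v$, $S_k(v)=vS_{k-1}(v)-S_{k-2}(v)$ for all integers $k$ (so $S_{-1}=0$). For $P\in SL_2(\mathbb C)$, $\mathrm{Ad}_P$ is the linear map $g\mapsto PgP^{-1}$ on $sl_2(\mathbb C)$, written as a $3\times3$ matrix with respect to the ordered basis $E=\begin{bmatrix}0&1\\0&0\end{bmatrix}$, $H=\begin{bmatrix}1&0\\0&-1\end{bmatrix}$, $F=\begin{bmatrix}0&0\\1&0\end{bmatrix}$, the $j$-th column being the coordinates of the image of the $j$-th basis vector. *)

theory Defs
  imports "HOL-Analysis.Analysis"
begin

fun chebS_nat :: "nat \<Rightarrow> complex \<Rightarrow> complex" where
  "chebS_nat 0 v = 1"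
| "chebS_nat (Suc 0) v = v"
| "chebS_nat (Suc (Suc k)) v = v * chebS_nat (Suc k) v - chebS_nat k v"

text \<open>Extension to all integers by the same recurrence: S_(-1) = 0, S_(-k) = - S_(k-2).\<close>
definition chebS :: "int \<Rightarrow> complex \<Rightarrow> complex" where
  "chebS k v = (if k \<ge> 0 then chebS_nat (nat k) v
                else if k = -1 then 0 else - chebS_nat (nat (- k - 2)) v)"

definition SL2 :: "(complex^2^2) set" where
  "SL2 = {P. det P = 1}"

definition mat2 :: "complex \<Rightarrow> complex \<Rightarrow> complex \<Rightarrow> complex \<Rightarrow> complex^2^2" where
  "mat2 a b c d = vector [vector [a, b], vector [c, d]]"

definition sl2E :: "complex^2^2" where "sl2E = mat2 0 1 0 0"
definition sl2H :: "complex^2^2" where "sl2H = mat2 1 0 0 (-1)"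
definition sl2F :: "complex^2^2" where "sl2F = mat2 0 0 1 0"

text \<open>Coordinates of a traceless matrix w.r.t. the ordered basis E, H, F.\<close>
definition sl2_coords :: "complex^2^2 \<Rightarrow> complex^3" where
  "sl2_coords A = vector [A$1$2, A$1$1, A$2$1]"

definition sl2_basis :: "3 \<Rightarrow> complex^2^2" where
  "sl2_basis j = (if j = 1 then sl2E else if j = 2 then sl2H else sl2F)"

definition Ad :: "complex^2^2 \<Rightarrow> complex^3^3" where
  "Ad P = (\<chi> i j. sl2_coords (P ** sl2_basis j ** matrix_inv P) $ i)"

definition mat3 :: "complex \<Rightarrow> complex \<Rightarrow> complex \<Rightarrow> complex \<Rightarrow> complex \<Rightarrow> complex
    \<Rightarrow> complex \<Rightarrow> complex \<Rightarrow> complex \<Rightarrow> complex^3^3" where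
  "mat3 a11 a12 a13 a21 a22 a23 a31 a32 a33 =
     vector [vector [a11, a12, a13], vector [a21, a22, a23], vector [a31, a32, a33]]"

fun matpow :: "complex^3^3 \<Rightarrow> nat \<Rightarrow> complex^3^3" where
  "matpow A 0 = mat 1"
| "matpow A (Suc k) = matpow A k ** A"

end

theory Submission
  imports Defs
begin

text \<open>
  The matrix of \<open>Ad\<^sub>M\<close> is multiplicative in M with entries quadratic in those of M, and
  by Cayley-Hamilton \<open>M^k = S\<^sub>k\<^sub>-\<^sub>1(\<mu>) M - S\<^sub>k\<^sub>-\<^sub>2(\<mu>) I\<close>, so every power of \<open>Ad\<^sub>M\<close> is explicit.
  The closed form of the partial sums then follows by induction on n: adding the next power
  changes each entry by a polynomial identity that holds modulo \<open>eh - fg = 1\<close> and the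
  Cassini identity \<open>S\<^sub>k\<^sup>2 - \<mu> S\<^sub>k S\<^sub>k\<^sub>-\<^sub>1 + S\<^sub>k\<^sub>-\<^sub>1\<^sup>2 = 1\<close>.
\<close>

lemma matrix_inv_unique:
  fixes A B :: "'a::comm_ring_1^'n^'n"
  assumes "A ** B = mat 1" "B ** A = mat 1"
  shows "matrix_inv A = B"
proof -
  define C where "C = matrix_inv A"
  have C: "A ** C = mat 1 \<and> C ** A = mat 1"
    unfolding C_def matrix_inv_def using someI_ex[of "\<lambda>A'. A ** A' = mat 1 \<and> A' ** A = mat 1"] assms
    by blast
  have "C = C ** (A ** B)" using assms by (simp add: matrix_mul_rid)
  also have "\<dots> = (C ** A) ** B" by (simp add: matrix_mul_assoc)
  also have "\<dots> = B" using C by (simp add: matrix_mul_lid)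
  finally show ?thesis unfolding C_def .
qed

lemma mat2_mult:
  "mat2 a b c d ** mat2 a' b' c' d' =
     mat2 (a*a' + b*c') (a*b' + b*d') (c*a' + d*c') (c*b' + d*d')"
  unfolding mat2_def by (simp add: vec_eq_iff forall_2 matrix_matrix_mult_def sum_2)

lemma mat2_one: "mat 1 = mat2 1 0 0 1"
  unfolding mat2_def by (simp add: vec_eq_iff forall_2 mat_def)

lemma mat2_eq_iff:
  "mat2 a b c d = mat2 a' b' c' d' \<longleftrightarrow> a = a' \<and> b = b' \<and> c = c' \<and> d = d'"
  unfolding mat2_def by (auto simp: vec_eq_iff forall_2)

lemma det_mat2: "det (mat2 a b c d) = a*d - b*c"
  unfolding mat2_def by (simp add: det_2)

lemma matrix_inv_mat2:
  assumes "a*d - b*c = 1"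
  shows "matrix_inv (mat2 a b c d) = mat2 d (-b) (-c) a"
  using assms by (intro matrix_inv_unique) (simp_all add: mat2_mult mat2_one mat2_eq_iff algebra_simps)

lemma mat3_eq_iff:
  "mat3 a1 a2 a3 a4 a5 a6 a7 a8 a9 = mat3 b1 b2 b3 b4 b5 b6 b7 b8 b9 \<longleftrightarrow>
     a1 = b1 \<and> a2 = b2 \<and> a3 = b3 \<and> a4 = b4 \<and> a5 = b5 \<and> a6 = b6 \<and> a7 = b7 \<and> a8 = b8 \<and> a9 = b9"
  unfolding mat3_def by (auto simp: vec_eq_iff forall_3)

lemma mat3_add:
  "mat3 a1 a2 a3 a4 a5 a6 a7 a8 a9 + mat3 b1 b2 b3 b4 b5 b6 b7 b8 b9 =
     mat3 (a1+b1) (a2+b2) (a3+b3) (a4+b4) (a5+b5) (a6+b6) (a7+b7) (a8+b8) (a9+b9)"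
  unfolding mat3_def by (simp add: vec_eq_iff forall_3)

lemma mat_mult_mat3:
  "mat c ** mat3 a1 a2 a3 a4 a5 a6 a7 a8 a9 =
     mat3 (c*a1) (c*a2) (c*a3) (c*a4) (c*a5) (c*a6) (c*a7) (c*a8) (c*a9)"
  unfolding mat3_def by (simp add: vec_eq_iff forall_3 matrix_matrix_mult_def mat_def sum_3)

lemma mat_eq_mat3: "mat c = mat3 c 0 0 0 c 0 0 0 c"
  by (simp add: vec_eq_iff mat_def mat3_def forall_3)

lemma mat_mult_mat: "(mat c :: 'a::comm_semiring_1^'n^'n) ** mat d = mat (c*d)"
  by (simp add: vec_eq_iff matrix_matrix_mult_def mat_def if_distrib[of "\<lambda>x. _ * x"] cong: if_cong)

definition sl2_adjoint :: "complex \<Rightarrow> complex \<Rightarrow> complex \<Rightarrow> complex \<Rightarrow> complex^3^3" where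
  "sl2_adjoint a b c d =
     mat3 (a^2) (-2*a*b) (-(b^2)) (-a*c) (a*d + b*c) (b*d) (-(c^2)) (2*c*d) (d^2)"

lemma Ad_mat2:
  assumes "a*d - b*c = 1"
  shows "Ad (mat2 a b c d) = sl2_adjoint a b c d"
  unfolding Ad_def matrix_inv_mat2[OF assms] sl2_adjoint_def
  by (simp add: vec_eq_iff forall_3 sl2_basis_def sl2E_def sl2H_def sl2F_def mat2_mult)
     (simp add: sl2_coords_def mat3_def mat2_def power2_eq_square algebra_simps)

lemma sl2_adjoint_mult:
  "sl2_adjoint a b c d ** sl2_adjoint a' b' c' d' =
     sl2_adjoint (a*a' + b*c') (a*b' + b*d') (c*a' + d*c') (c*b' + d*d')"
  unfolding sl2_adjoint_def mat3_def
  by (simp add: vec_eq_iff forall_3 matrix_matrix_mult_def sum_3 power2_eq_square algebra_simps)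

text \<open>\<open>chebS_shift v k = S\<^sub>k\<^sub>-\<^sub>1(v)\<close>, so that the recursion runs over the naturals from \<open>S\<^sub>-\<^sub>1 = 0\<close>.\<close>

fun chebS_shift :: "complex \<Rightarrow> nat \<Rightarrow> complex" where
  "chebS_shift v 0 = 0"
| "chebS_shift v (Suc k) = chebS_nat k v"

lemma chebS_shift_rec: "chebS_shift v (Suc (Suc k)) = v * chebS_shift v (Suc k) - chebS_shift v k"
  by (cases k) simp_all

lemma chebS_shift_cassini:
  "(chebS_shift v (Suc k))^2 - v * chebS_shift v (Suc k) * chebS_shift v k + (chebS_shift v k)^2 = 1"
proof (induction k)
  case 0
  then show ?case by simp
next
  case (Suc k)
  then show ?case unfolding chebS_shift_rec[of v k] by algebra
qed

lemma chebS_int_minus_one: "chebS (int k - 1) v = chebS_shift v k"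
  by (cases k) (simp_all add: chebS_def)

lemma matpow_Ad_mat2:
  assumes det: "e*h - f*g = 1" and trace: "\<mu> = e + h"
  shows "matpow (Ad (mat2 e f g h)) (Suc k) =
    sl2_adjoint (chebS_shift \<mu> (Suc k) * e - chebS_shift \<mu> k) (chebS_shift \<mu> (Suc k) * f)
      (chebS_shift \<mu> (Suc k) * g) (chebS_shift \<mu> (Suc k) * h - chebS_shift \<mu> k)"
proof (induction k)
  case 0
  then show ?case using Ad_mat2[OF det] by (simp add: matrix_mul_lid)
next
  case (Suc k)
  define p where "p = chebS_shift \<mu> (Suc k)"
  define q where "q = chebS_shift \<mu> k"
  have fg: "f*g = e*h - 1" using det by (simp add: algebra_simps)
  have "matpow (Ad (mat2 e f g h)) (Suc (Suc k)) =
      sl2_adjoint (p*e - q) (p*f) (p*g) (p*h - q) ** sl2_adjoint e f g h"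
    using Suc Ad_mat2[OF det] unfolding p_def q_def by simp
  also have "\<dots> = sl2_adjoint ((\<mu>*p - q)*e - p) ((\<mu>*p - q)*f) ((\<mu>*p - q)*g) ((\<mu>*p - q)*h - p)"
  proof -
    \<comment> \<open>Cayley-Hamilton: \<open>(pM - qI) M = (\<mu>p - q) M - p I\<close>\<close>
    have "(p*e - q)*e + p*f*g = (\<mu>*p - q)*e - p" "(p*e - q)*f + p*f*h = (\<mu>*p - q)*f"
      "p*g*e + (p*h - q)*g = (\<mu>*p - q)*g" "p*g*f + (p*h - q)*h = (\<mu>*p - q)*h - p"
      using fg trace by algebra+
    then show ?thesis by (simp only: sl2_adjoint_mult)
  qed
  finally show ?case unfolding chebS_shift_rec p_def q_def by simp
qed

definition sum_formula :: "complex \<Rightarrow> complex \<Rightarrow> complex \<Rightarrow> complex \<Rightarrow> complex \<Rightarrow> complex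
    \<Rightarrow> complex \<Rightarrow> complex \<Rightarrow> complex^3^3" where
  "sum_formula e f g h \<mu> n X Y = mat3
      (2*n*f*g + h^2*(2*X - \<mu>*Y) - 2*h*(\<mu>*X - 2*Y) + (\<mu>^2 - 2)*X - \<mu>*Y)
      (2*f*(n*(e - h) + h*(2*X - \<mu>*Y) - \<mu>*X + 2*Y))
      (f^2*(2*n - 2*X + \<mu>*Y))
      (-g*(n*(h - e) - h*(2*X - \<mu>*Y) + \<mu>*X - 2*Y))
      (n*(e - h)^2 + 2*f*g*(2*X - \<mu>*Y))
      (f*(n*(e - h) + h*(2*X - \<mu>*Y) - \<mu>*X + (\<mu>^2 - 2)*Y))
      (g^2*(2*n - 2*X + \<mu>*Y))
      (-2*g*(n*(h - e) - h*(2*X - \<mu>*Y) + \<mu>*X - (\<mu>^2 - 2)*Y))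
      (2*n*f*g + h^2*(2*X - \<mu>*Y) - 2*h*(\<mu>*X - (\<mu>^2 - 2)*Y) + (\<mu>^2 - 2)*X - (\<mu>^3 - 3*\<mu>)*Y)"

lemma sum_formula_one:
  assumes "e*h - f*g = 1" "\<mu> = e + h"
  shows "sum_formula e f g h \<mu> 1 1 0 = mat (\<mu>^2 - 4)"
proof -
  have "f*g = e*h - 1" using assms(1) by (simp add: algebra_simps)
  then show ?thesis
    unfolding sum_formula_def mat_eq_mat3 mat3_eq_iff using assms(2) by (simp add: power2_eq_square) algebra
qed

lemma sum_formula_step:
  assumes det: "e*h - f*g = 1" and trace: "\<mu> = e + h" and cassini: "p^2 - \<mu>*p*q + q^2 = 1"
  shows "sum_formula e f g h \<mu> (n + 1) ((\<mu>*p - q)^2) ((\<mu>*p - q)*p) =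
     sum_formula e f g h \<mu> n (p^2) (p*q) + mat (\<mu>^2 - 4) ** sl2_adjoint (p*e - q) (p*f) (p*g) (p*h - q)"
proof -
  have "f*g = e*h - 1" using det by (simp add: algebra_simps)
  moreover have "q^2 = 1 - p^2 + \<mu>*p*q" using cassini by (simp add: algebra_simps)
  ultimately show ?thesis
    unfolding sum_formula_def sl2_adjoint_def mat_mult_mat3 mat3_add mat3_eq_iff
    using trace by (intro conjI) algebra+
qed

lemma sum_matpow_Ad_mat2:
  assumes det: "e*h - f*g = 1" and trace: "\<mu> = e + h" and "\<mu>^2 \<noteq> 4"
  shows "(\<Sum>i<Suc m. matpow (Ad (mat2 e f g h)) i) =
    mat (1 / (\<mu>^2 - 4)) ** sum_formula e f g h \<mu> (of_nat (Suc m))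
      ((chebS_shift \<mu> (Suc m))^2) (chebS_shift \<mu> (Suc m) * chebS_shift \<mu> m)"
proof (induction m)
  case 0
  have "\<mu>^2 - 4 \<noteq> 0" using assms(3) by simp
  then show ?case using sum_formula_one[OF det trace] by (simp add: mat_mult_mat)
next
  case (Suc m)
  define p where "p = chebS_shift \<mu> (Suc m)"
  define q where "q = chebS_shift \<mu> m"
  have "\<mu>^2 - 4 \<noteq> 0" using assms(3) by simp
  then have "(\<Sum>i<Suc (Suc m). matpow (Ad (mat2 e f g h)) i) =
      mat (1 / (\<mu>^2 - 4)) ** (sum_formula e f g h \<mu> (of_nat (Suc m)) (p^2) (p*q)
        + mat (\<mu>^2 - 4) ** sl2_adjoint (p*e - q) (p*f) (p*g) (p*h - q))"
    using Suc matpow_Ad_mat2[OF det trace, of m] unfolding p_def q_def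
    by (simp add: matrix_add_ldistrib matrix_mul_assoc mat_mult_mat matrix_mul_lid)
  also have "\<dots> = mat (1 / (\<mu>^2 - 4)) **
      sum_formula e f g h \<mu> (of_nat (Suc (Suc m))) ((\<mu>*p - q)^2) ((\<mu>*p - q)*p)"
    unfolding of_nat_Suc[of "Suc m"] add.commute[of 1 "of_nat (Suc m)"]
    by (simp only: sum_formula_step[OF det trace chebS_shift_cassini[of \<mu> m, folded p_def q_def]])
  finally show ?case unfolding chebS_shift_rec[of \<mu> m, folded p_def q_def] p_def .
qed

theorem proposition3p1:
  fixes e f g h \<mu> X Y :: complex and n :: nat
  assumes "mat2 e f g h \<in> SL2"
    and "\<mu> = e + h"
    and "\<mu>^2 \<noteq> 4"
    and "n \<ge> 1"
    and "X = (chebS (int n - 1) \<mu>)^2"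
    and "Y = chebS (int n - 1) \<mu> * chebS (int n - 2) \<mu>"
  shows "(\<Sum>i<n. matpow (Ad (mat2 e f g h)) i) =
    mat (1 / (\<mu>^2 - 4)) ** mat3
      (2*n*f*g + h^2*(2*X - \<mu>*Y) - 2*h*(\<mu>*X - 2*Y) + (\<mu>^2 - 2)*X - \<mu>*Y)
      (2*f*(n*(e - h) + h*(2*X - \<mu>*Y) - \<mu>*X + 2*Y))
      (f^2*(2*n - 2*X + \<mu>*Y))
      (-g*(n*(h - e) - h*(2*X - \<mu>*Y) + \<mu>*X - 2*Y))
      (n*(e - h)^2 + 2*f*g*(2*X - \<mu>*Y))
      (f*(n*(e - h) + h*(2*X - \<mu>*Y) - \<mu>*X + (\<mu>^2 - 2)*Y))
      (g^2*(2*n - 2*X + \<mu>*Y))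
      (-2*g*(n*(h - e) - h*(2*X - \<mu>*Y) + \<mu>*X - (\<mu>^2 - 2)*Y))
      (2*n*f*g + h^2*(2*X - \<mu>*Y) - 2*h*(\<mu>*X - (\<mu>^2 - 2)*Y) + (\<mu>^2 - 2)*X - (\<mu>^3 - 3*\<mu>)*Y)"
proof -
  obtain m where n: "n = Suc m" using assms(4) by (cases n) auto
  have det: "e*h - f*g = 1" using assms(1) by (simp add: SL2_def det_mat2)
  have "int n - 2 = int m - 1" using n by simp
  then have "X = (chebS_shift \<mu> (Suc m))^2" "Y = chebS_shift \<mu> (Suc m) * chebS_shift \<mu> m"
    using assms(5,6) n by (simp_all only: chebS_int_minus_one)
  then show ?thesis
    using sum_matpow_Ad_mat2[OF det assms(2,3), of m] unfolding n sum_formula_def by simp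
qed

end
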